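(* Let $G\in\mathcal{G}(\widehat{C}_6,\widehat{C}_7)$, let $x\in V(G)$, let $A$ be a connected component of $G[N_2(x)]$ not belonging to $A^*$, and let $a\in V(A)$ have a neighbour in $A$. Suppose $N(a)\cap D=\{v_1,\dots,v_k\}$ with $k>2$. Then $N(\{v_1,\dots,v_k\})\cap N_2(x)=\{a\}$.
   Context: All graphs are finite, simple and undirected. $\mathcal{G}(\widehat{C}_6,\widehat{C}_7)$ is the family of graphs with no subgraph (not necessarily induced) isomorphic to $C_6$ or $C_7$. For a vertex set $S$, $N_i(S)$ is the set of vertices at distance exactly $i$ from $S$, $N(S)=N_1(S)$, $N[S]=S\cup N(S)$, $N(v)=N(\{v\})$, $N_2(v)=N_2(\{v\})$ (all in $G$). $A^*$ is the set of connected components $A$ of $G[N_2(x)]$ for which there exists a vertex $a\in V(A)$ with $N(x)\cap N(a)=N(x)\cap N(V(A))$; $V(A^* )$ is the union of their vertex sets; and $D=N(x)\setminus N(V(A^* ))$ (the vertices of $N(x)$ having no neighbour in a component of $A^*$). *)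

theory Defs
  imports Main
begin

definition simple_graph :: "'a set \<Rightarrow> ('a \<Rightarrow> 'a \<Rightarrow> bool) \<Rightarrow> bool" where
  "simple_graph V E \<longleftrightarrow> finite V \<and> (\<forall>u v. E u v \<longrightarrow> u \<in> V \<and> v \<in> V)
     \<and> (\<forall>u v. E u v \<longrightarrow> E v u) \<and> (\<forall>v. \<not> E v v)"

definition has_cycle_subgraph :: "'a set \<Rightarrow> ('a \<Rightarrow> 'a \<Rightarrow> bool) \<Rightarrow> nat \<Rightarrow> bool" where
  "has_cycle_subgraph V E k \<longleftrightarrow> (\<exists>f :: nat \<Rightarrow> 'a. inj_on f {0..<k} \<and> f ` {0..<k} \<subseteq> V
     \<and> (\<forall>i<k. E (f i) (f (Suc i mod k))))"

definition no_C6_C7 :: "'a set \<Rightarrow> ('a \<Rightarrow> 'a \<Rightarrow> bool) \<Rightarrow> bool" where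
  "no_C6_C7 V E \<longleftrightarrow> \<not> has_cycle_subgraph V E 6 \<and> \<not> has_cycle_subgraph V E 7"

inductive walk_len :: "('a \<Rightarrow> 'a \<Rightarrow> bool) \<Rightarrow> 'a \<Rightarrow> nat \<Rightarrow> 'a \<Rightarrow> bool" for E where
  wl0: "walk_len E u 0 u"
| wlS: "E u w \<Longrightarrow> walk_len E w n v \<Longrightarrow> walk_len E u (Suc n) v"

definition dist_set_eq :: "('a \<Rightarrow> 'a \<Rightarrow> bool) \<Rightarrow> 'a set \<Rightarrow> 'a \<Rightarrow> nat \<Rightarrow> bool" where
  "dist_set_eq E S v i \<longleftrightarrow> (\<exists>s\<in>S. walk_len E s i v) \<and> (\<forall>j<i. \<forall>s\<in>S. \<not> walk_len E s j v)"

definition Ni :: "'a set \<Rightarrow> ('a \<Rightarrow> 'a \<Rightarrow> bool) \<Rightarrow> nat \<Rightarrow> 'a set \<Rightarrow> 'a set" where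
  "Ni V E i S = {v \<in> V. dist_set_eq E S v i}"

abbreviation NS :: "'a set \<Rightarrow> ('a \<Rightarrow> 'a \<Rightarrow> bool) \<Rightarrow> 'a set \<Rightarrow> 'a set" where
  "NS V E S \<equiv> Ni V E 1 S"

abbreviation Nv :: "'a set \<Rightarrow> ('a \<Rightarrow> 'a \<Rightarrow> bool) \<Rightarrow> 'a \<Rightarrow> 'a set" where
  "Nv V E v \<equiv> Ni V E 1 {v}"

abbreviation N2v :: "'a set \<Rightarrow> ('a \<Rightarrow> 'a \<Rightarrow> bool) \<Rightarrow> 'a \<Rightarrow> 'a set" where
  "N2v V E v \<equiv> Ni V E 2 {v}"

definition components :: "('a \<Rightarrow> 'a \<Rightarrow> bool) \<Rightarrow> 'a set \<Rightarrow> 'a set set" where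
  "components E W = {{v \<in> W. (\<lambda>p q. p \<in> W \<and> q \<in> W \<and> E p q)\<^sup>*\<^sup>* a v} | a. a \<in> W}"

definition Astar :: "'a set \<Rightarrow> ('a \<Rightarrow> 'a \<Rightarrow> bool) \<Rightarrow> 'a \<Rightarrow> 'a set set" where
  "Astar V E x = {A \<in> components E (N2v V E x).
      \<exists>a\<in>A. Nv V E x \<inter> Nv V E a = Nv V E x \<inter> NS V E A}"

definition Dset :: "'a set \<Rightarrow> ('a \<Rightarrow> 'a \<Rightarrow> bool) \<Rightarrow> 'a \<Rightarrow> 'a set" where
  "Dset V E x = Nv V E x - NS V E (\<Union> (Astar V E x))"

end

theory Submission
  imports Defs
begin

text \<open>
  The vertices of S = N(a) \<inter> D are common neighbours of x and a, and there are at least three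
  of them, so every short path through a, x and N(x) can be closed via a vertex of S avoiding
  any two given ones. Excluding C_6 and C_7 this way shows: a vertex w \<noteq> a of N_2(x) adjacent
  to some s \<in> S lies in a component that belongs to A^*. Inside the component of a this is
  because that component is a star centred at a, and then a sees all of N(x) \<inter> N(A); in any
  other component every vertex is adjacent to s and s is its only neighbour in N(x), so w
  is a witness. Either way s would have a neighbour in V(A^*), contradicting s \<in> D.
\<close>

lemma walk_len_0_iff: "walk_len E u 0 v \<longleftrightarrow> u = v"
  by (auto elim: walk_len.cases intro: walk_len.intros)

lemma walk_len_Suc_iff: "walk_len E u (Suc n) v \<longleftrightarrow> (\<exists>w. E u w \<and> walk_len E w n v)"
  by (auto elim: walk_len.cases intro: walk_len.intros)

(* Keeps the index of NS V E T = Ni V E 1 T from being rewritten to Suc 0, so that the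
   rules about NS below stay applicable. *)
declare One_nat_def [simp del]

lemma mem_NS_iff: "u \<in> NS V E T \<longleftrightarrow> u \<in> V \<and> u \<notin> T \<and> (\<exists>s\<in>T. E s u)"
  unfolding Ni_def dist_set_eq_def One_nat_def by (auto simp: walk_len_Suc_iff walk_len_0_iff)

lemma mem_N2v_iff: "u \<in> N2v V E x \<longleftrightarrow> u \<in> V \<and> u \<noteq> x \<and> \<not> E x u \<and> (\<exists>m. E x m \<and> E m u)"
  unfolding Ni_def dist_set_eq_def numeral_2_eq_2
  by (auto simp: walk_len_Suc_iff walk_len_0_iff less_Suc_eq)

lemma has_cycle_subgraphI:
  assumes "distinct cs" "set cs \<subseteq> V" "successively E (cs @ [hd cs])"
  shows "has_cycle_subgraph V E (length cs)"
  unfolding has_cycle_subgraph_def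
proof (intro exI conjI allI impI)
  let ?k = "length cs"
  show "inj_on ((!) cs) {0..<?k}" using assms(1) by (simp add: inj_on_nth)
  show "(!) cs ` {0..<?k} \<subseteq> V" by (auto intro!: subsetD[OF assms(2)])
  fix i assume i: "i < ?k"
  have "E ((cs @ [hd cs]) ! i) ((cs @ [hd cs]) ! Suc i)"
    using successively_nth[OF assms(3)] i by simp
  moreover have "(cs @ [hd cs]) ! Suc i = cs ! (Suc i mod ?k)"
  proof -
    have "cs \<noteq> []" using i by auto
    then show ?thesis using i by (cases "Suc i = ?k") (auto simp: nth_append hd_conv_nth)
  qed
  ultimately show "E (cs ! i) (cs ! (Suc i mod ?k))"
    using i by (simp add: nth_append)
qed

lemma card_gt_2_obtains_other:
  assumes "card S > 2"
  obtains v where "v \<in> S" "v \<noteq> s" "v \<noteq> t"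
proof -
  have "\<not> S \<subseteq> {s, t}"
    using assms card_mono[of "{s, t}" S] card_insert_le_m1[of 2 "{t}" s] by auto
  then show thesis using that by blast
qed

definition component_of :: "('a \<Rightarrow> 'a \<Rightarrow> bool) \<Rightarrow> 'a set \<Rightarrow> 'a \<Rightarrow> 'a set" where
  "component_of E W w = {v \<in> W. (\<lambda>p q. p \<in> W \<and> q \<in> W \<and> E p q)\<^sup>*\<^sup>* w v}"

lemma components_eq_image_component_of: "components E W = component_of E W ` W"
  unfolding components_def component_of_def by blast

lemma components_subset: "A \<in> components E W \<Longrightarrow> A \<subseteq> W"
  unfolding components_def by blast

lemma in_component_ofD: "v \<in> component_of E W w \<Longrightarrow> v \<in> W"
  unfolding component_of_def by blast

lemma self_in_component_of: "w \<in> W \<Longrightarrow> w \<in> component_of E W w"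
  unfolding component_of_def by simp

lemma component_of_in_components: "w \<in> W \<Longrightarrow> component_of E W w \<in> components E W"
  by (simp add: components_eq_image_component_of)

lemma component_of_eq:
  assumes "symp E" "v \<in> component_of E W w"
  shows "component_of E W v = component_of E W w"
proof -
  let ?R = "\<lambda>p q. p \<in> W \<and> q \<in> W \<and> E p q"
  have "symp ?R" using assms(1) by (auto simp: symp_def)
  then have "symp ?R\<^sup>*\<^sup>*" by (rule symp_rtranclp)
  moreover have "?R\<^sup>*\<^sup>* w v" using assms(2) unfolding component_of_def by simp
  ultimately show ?thesis
    unfolding component_of_def by (auto dest: sympD intro: rtranclp_trans)
qed

lemma component_of_induct [consumes 1, case_names self step]:
  assumes "v \<in> component_of E W w" and "P w"
    and "\<And>y z. y \<in> component_of E W w \<Longrightarrow> z \<in> component_of E W w \<Longrightarrow> E y z \<Longrightarrow> P y \<Longrightarrow> P z"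
  shows "P v"
proof -
  have "(\<lambda>p q. p \<in> W \<and> q \<in> W \<and> E p q)\<^sup>*\<^sup>* w v" using assms(1) unfolding component_of_def by simp
  then show ?thesis
  proof (induction rule: rtranclp_induct)
    case base show ?case by (fact assms(2))
  next
    case (step y z)
    then have "y \<in> component_of E W w" "z \<in> component_of E W w"
      unfolding component_of_def by (auto intro: rtranclp.rtrancl_into_rtrancl)
    with step show ?case using assms(3) by blast
  qed
qed

lemma N2v_not_adjacent: "q \<in> N2v V E x \<Longrightarrow> \<not> E x q"
  by (simp add: mem_N2v_iff)

lemma Union_Astar_subset: "\<Union> (Astar V E x) \<subseteq> N2v V E x"
  unfolding Astar_def by (auto dest: components_subset)

locale C67_free_graph =
  fixes V :: "'a set" and E :: "'a \<Rightarrow> 'a \<Rightarrow> bool"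
  assumes simple: "simple_graph V E" and C67_free: "no_C6_C7 V E"
begin

lemma edge_sym: "E u v \<Longrightarrow> E v u"
  using simple unfolding simple_graph_def by blast

lemma edge_irrefl [simp]: "\<not> E v v"
  using simple unfolding simple_graph_def by blast

lemma edge_in_V: "E u v \<Longrightarrow> u \<in> V \<and> v \<in> V"
  using simple unfolding simple_graph_def by blast

lemma symp_E: "symp E"
  by (auto intro: sympI edge_sym)

lemma mem_Nv_iff: "u \<in> Nv V E v \<longleftrightarrow> E v u"
  by (auto simp: mem_NS_iff dest: edge_in_V)

lemma no_6_7_cycle:
  assumes "length cs \<in> {6, 7}" "distinct cs" and closed: "successively E (cs @ [hd cs])"
  shows False
proof -
  have "set cs \<subseteq> V"
  proof
    fix v assume "v \<in> set cs"
    then obtain i where "i < length cs" "v = cs ! i" by (auto simp: in_set_conv_nth)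
    then have "E v ((cs @ [hd cs]) ! Suc i)"
      using successively_nth[OF closed] by (simp add: nth_append)
    then show "v \<in> V" using edge_in_V by blast
  qed
  with assms(2) closed have "has_cycle_subgraph V E (length cs)" by (intro has_cycle_subgraphI)
  with assms(1) C67_free show False unfolding no_C6_C7_def by auto
qed

lemma Astar_memI:
  assumes "B \<in> components E (N2v V E x)" "b \<in> B"
    and "\<And>u c. E x u \<Longrightarrow> c \<in> B \<Longrightarrow> E c u \<Longrightarrow> E b u"
  shows "B \<in> Astar V E x"
proof -
  have "u \<notin> B" if "E x u" for u
    using that components_subset[OF assms(1)] N2v_not_adjacent[of _ V E x] by blast
  then have "Nv V E x \<inter> Nv V E b = Nv V E x \<inter> NS V E B"
    using assms(2,3) by (auto simp: mem_Nv_iff mem_NS_iff dest: edge_in_V)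
  then show ?thesis using assms(1,2) unfolding Astar_def by blast
qed

lemma Dset_not_adjacent_Astar:
  assumes "s \<in> Dset V E x" "B \<in> Astar V E x" "w \<in> B"
  shows "\<not> E s w"
proof
  assume "E s w"
  have "E x s" using assms(1) by (simp add: Dset_def mem_Nv_iff)
  then have "s \<notin> \<Union> (Astar V E x)"
    using Union_Astar_subset[of V E x] N2v_not_adjacent[of s V E x] by blast
  with edge_sym[OF \<open>E s w\<close>] assms(2,3) have "s \<in> NS V E (\<Union> (Astar V E x))"
    by (auto simp: mem_NS_iff dest: edge_in_V)
  with assms(1) show False by (simp add: Dset_def)
qed

end

locale many_common_neighbours = C67_free_graph +
  fixes x a :: 'a and S :: "'a set"
  assumes a_in_N2: "a \<in> N2v V E x"
    and S_subset: "S \<subseteq> Nv V E x \<inter> Nv V E a"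
    and card_S: "card S > 2"
begin

abbreviation N2 :: "'a set" where "N2 \<equiv> N2v V E x"

lemma S_adjacent:
  assumes "s \<in> S"
  shows "E x s" "E s x" "E a s" "E s a"
proof -
  show "E x s" "E a s" using assms S_subset by (auto simp: mem_Nv_iff)
  then show "E s x" "E s a" by (auto intro: edge_sym)
qed

lemma N2_not_adjacent:
  assumes "q \<in> N2"
  shows "q \<noteq> x" "\<not> E x q" "\<not> E q x"
  using assms by (auto simp: mem_N2v_iff dest: edge_sym)

lemma N2_obtain_middle:
  assumes "q \<in> N2"
  obtains t where "E x t" "E t x" "E t q" "E q t"
  using assms by (auto simp: mem_N2v_iff intro: edge_sym)

lemma no_N2_path_avoiding_a:
  assumes "q1 \<in> N2" "q2 \<in> N2" "q2 \<noteq> a" "E a q1"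
  shows "\<not> E q1 q2"
proof
  assume "E q1 q2"
  obtain t where t: "E x t" "E t x" "E t q2" "E q2 t" using N2_obtain_middle[OF assms(2)] .
  obtain v where v: "v \<in> S" "v \<noteq> t" using card_gt_2_obtains_other[OF card_S] by metis
  have "distinct [a, q1, q2, t, x, v]"
    using assms \<open>E q1 q2\<close> t v S_adjacent[OF v(1)] N2_not_adjacent[OF a_in_N2]
      N2_not_adjacent[OF assms(1)] N2_not_adjacent[OF assms(2)]
    by auto
  moreover have "successively E ([a, q1, q2, t, x, v] @ [a])"
    using assms(4) \<open>E q1 q2\<close> t S_adjacent[OF v(1)] by simp
  ultimately show False by (intro no_6_7_cycle[of "[a, q1, q2, t, x, v]"]) simp_all
qed

lemma component_of_a_star:
  assumes "v \<in> component_of E N2 a"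
  shows "v = a \<or> E a v"
  using assms
proof (induction rule: component_of_induct)
  case self
  then show ?case by simp
next
  case (step y z)
  then show ?case
    using no_N2_path_avoiding_a[of y z] by (auto dest: in_component_ofD)
qed

lemma unique_N_neighbour:
  assumes "z \<in> N2" "z \<noteq> a" "s \<in> S" "E s z" "E x u" "E z u"
  shows "u = s"
proof (rule ccontr)
  assume "u \<noteq> s"
  obtain v where v: "v \<in> S" "v \<noteq> s" "v \<noteq> u" using card_gt_2_obtains_other[OF card_S] by metis
  have "distinct [z, s, a, v, x, u]"
    using assms \<open>u \<noteq> s\<close> v S_adjacent[OF v(1)] S_adjacent[OF assms(3)]
      N2_not_adjacent[OF a_in_N2] N2_not_adjacent[OF assms(1)]
    by auto
  moreover have "successively E ([z, s, a, v, x, u] @ [z])"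
    using assms(4-6) S_adjacent[OF assms(3)] S_adjacent[OF v(1)] by (simp add: edge_sym)
  ultimately show False by (intro no_6_7_cycle[of "[z, s, a, v, x, u]"]) simp_all
qed

lemma S_neighbour_spreads:
  assumes "z \<in> N2" "z \<noteq> a" "s \<in> S" "E s z" "q \<in> N2" "q \<noteq> a" "E z q"
  shows "E s q"
proof (rule ccontr)
  assume "\<not> E s q"
  obtain t where t: "E x t" "E t x" "E t q" "E q t" using N2_obtain_middle[OF assms(5)] .
  obtain v where v: "v \<in> S" "v \<noteq> s" "v \<noteq> t" using card_gt_2_obtains_other[OF card_S] by metis
  have "distinct [z, q, t, x, v, a, s]"
    using assms \<open>\<not> E s q\<close> t v S_adjacent[OF v(1)] S_adjacent[OF assms(3)]
      N2_not_adjacent[OF a_in_N2] N2_not_adjacent[OF assms(1)] N2_not_adjacent[OF assms(5)]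
    by auto
  moreover have "successively E ([z, q, t, x, v, a, s] @ [z])"
    using assms(4,7) t S_adjacent[OF assms(3)] S_adjacent[OF v(1)] by (simp add: edge_sym)
  ultimately show False by (intro no_6_7_cycle[of "[z, q, t, x, v, a, s]"]) simp_all
qed

lemma component_of_a_in_Astar:
  assumes "w \<in> component_of E N2 a" "w \<noteq> a" "s \<in> S" "E s w"
  shows "component_of E N2 a \<in> Astar V E x"
proof (rule Astar_memI)
  show "component_of E N2 a \<in> components E N2" by (rule component_of_in_components[OF a_in_N2])
  show "a \<in> component_of E N2 a" by (rule self_in_component_of[OF a_in_N2])
  fix u c assume u: "E x u" and c: "c \<in> component_of E N2 a" "E c u"
  show "E a u"
  proof (rule ccontr)
    assume "\<not> E a u"
    then have "c \<noteq> a" using c by auto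
    then have "E a c" using component_of_a_star[OF c(1)] by simp
    have "E a w" using component_of_a_star[OF assms(1)] assms(2) by simp
    have "c \<in> N2" "w \<in> N2" using c(1) assms(1) by (auto dest: in_component_ofD)
    show False
    proof (cases "c = w")
      case True
      then have "u = s" using unique_N_neighbour[of w s u] assms u c \<open>w \<in> N2\<close> by blast
      then show False using S_adjacent[OF assms(3)] \<open>\<not> E a u\<close> by simp
    next
      case False
      have "distinct [x, u, c, a, w, s]"
        using False assms(2) u \<open>\<not> E a u\<close> \<open>c \<noteq> a\<close> \<open>E a c\<close> S_adjacent[OF assms(3)]
          N2_not_adjacent[OF a_in_N2] N2_not_adjacent[OF \<open>c \<in> N2\<close>] N2_not_adjacent[OF \<open>w \<in> N2\<close>]
        by auto
      moreover have "successively E ([x, u, c, a, w, s] @ [x])"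
        using u c(2) \<open>E a c\<close> \<open>E a w\<close> assms(4) S_adjacent[OF assms(3)] by (simp add: edge_sym)
      ultimately show False by (intro no_6_7_cycle[of "[x, u, c, a, w, s]"]) simp_all
    qed
  qed
qed

lemma other_component_in_Astar:
  assumes "w \<in> N2" "a \<notin> component_of E N2 w" "s \<in> S" "E s w"
  shows "component_of E N2 w \<in> Astar V E x"
proof -
  let ?B = "component_of E N2 w"
  have adjacent_s: "E s z" if "z \<in> ?B" for z
    using that
  proof (induction rule: component_of_induct)
    case self
    show ?case by (fact assms(4))
  next
    case (step y z)
    then show ?case
      using S_neighbour_spreads[of y s z] assms(2,3) by (auto dest: in_component_ofD)
  qed
  show ?thesis
  proof (rule Astar_memI[OF component_of_in_components self_in_component_of])
    fix u c assume "E x u" "c \<in> ?B" "E c u"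
    then have "u = s"
      using unique_N_neighbour[of c s u] adjacent_s assms(2,3) by (auto dest: in_component_ofD)
    then show "E w u" using edge_sym[OF assms(4)] by simp
  qed (fact assms(1))+
qed

lemma component_in_Astar:
  assumes "w \<in> N2" "w \<noteq> a" "s \<in> S" "E s w"
  shows "component_of E N2 w \<in> Astar V E x"
proof (cases "a \<in> component_of E N2 w")
  case True
  then have "component_of E N2 a = component_of E N2 w" by (rule component_of_eq[OF symp_E])
  then show ?thesis
    using component_of_a_in_Astar[of w s] self_in_component_of[OF assms(1)] assms by simp
next
  case False
  then show ?thesis using other_component_in_Astar assms by blast
qed

lemma NS_inter_N2_eq:
  assumes "S \<subseteq> Dset V E x"
  shows "NS V E S \<inter> N2 = {a}"
proof
  show "NS V E S \<inter> N2 \<subseteq> {a}"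
  proof
    fix w assume w: "w \<in> NS V E S \<inter> N2"
    then obtain s where s: "s \<in> S" "E s w" by (auto simp: mem_NS_iff)
    show "w \<in> {a}"
    proof (rule ccontr)
      assume "w \<notin> {a}"
      then have "component_of E N2 w \<in> Astar V E x" using component_in_Astar w s by auto
      moreover have "w \<in> component_of E N2 w" using w by (simp add: self_in_component_of)
      ultimately show False
        using Dset_not_adjacent_Astar[of s] assms s by blast
    qed
  qed
  obtain s where "s \<in> S" using card_gt_2_obtains_other[OF card_S] by metis
  moreover have "a \<notin> S" using S_adjacent(1) N2_not_adjacent(2)[OF a_in_N2] by blast
  moreover have "a \<in> V" using a_in_N2 by (simp add: mem_N2v_iff)
  ultimately have "a \<in> NS V E S" using S_adjacent(4) by (auto simp: mem_NS_iff)
  then show "{a} \<subseteq> NS V E S \<inter> N2" using a_in_N2 by simp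
qed

end

theorem lemma2p10:
  fixes V :: "'a set" and E :: "'a \<Rightarrow> 'a \<Rightarrow> bool" and x a :: 'a and A :: "'a set"
  assumes "simple_graph V E"
    and "no_C6_C7 V E"
    and "x \<in> V"
    and "A \<in> components E (N2v V E x)"
    and "A \<notin> Astar V E x"
    and "a \<in> A"
    and "\<exists>b\<in>A. E a b"
    and "card (Nv V E a \<inter> Dset V E x) > 2"
  shows "NS V E (Nv V E a \<inter> Dset V E x) \<inter> N2v V E x = {a}"
proof -
  have "a \<in> N2v V E x" using assms(4,6) components_subset by blast
  moreover have "Nv V E a \<inter> Dset V E x \<subseteq> Nv V E x \<inter> Nv V E a" by (auto simp: Dset_def)
  ultimately interpret many_common_neighbours V E x a "Nv V E a \<inter> Dset V E x"
    using assms(1,2,8)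
    by (intro many_common_neighbours.intro C67_free_graph.intro many_common_neighbours_axioms.intro)
  show ?thesis by (rule NS_inter_N2_eq) (rule Int_lower2)
qed

end
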